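(* Assign to the edges of the $\mathbb{Z}^2$ nearest-neighbour lattice i.i.d. weights $(\omega_e)$ with distribution $F$ supported on $[0,\infty)$, with $r:=\inf\{x\ge0:F(x)>0\}$, satisfying $F(0)<1/2$ and $F(r)<\vec p_c$ (the critical probability of oriented bond percolation on $\mathbb{Z}^2$). Let $\delta>0$ be fixed such that, for every $m\ge2$ and $z$, $\mathbb{P}(A_{L,m}(z))\to1$ as $L\to\infty$. Then for every $m\ge2$ and all sufficiently large integers $L\ge1$ there exist constants $\theta,\gamma>0$ and $C<\infty$ such that for all $x,y\in\mathbb{Z}^2$, $$\mathbb{P}\big(\exists\text{ a nearest-neighbour path from $x$ to $y$ visiting at most }\theta\|y-x\|\text{ tiles }B(z,L),\,z\in V_L,\text{ for which }A_{L,m}(z)\text{ occurs}\big)<C\exp(-\gamma\|y-x\|).$$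
   Context: $\|\cdot\|$ is the $\ell^1$-norm. For an integer $L\ge1$, $B(z,L):=\{x:\|x-z\|\le L\}$ and $V_L:=\{(2iL+jL,\,jL):i,j\in\mathbb{Z}\}$; the balls $B(z,L)$, $z\in V_L$, are called tiles, and a path visits a tile if it contains a vertex of it. For $m\ge2$ and $z\in V_L$, $A_{L,m}(z)$ is the event that every path connecting $B(z,L)$ to $\partial B(z,mL)$ has total weight $\sum_{e}\omega_e$ at least $(m-1)L(r+\delta)$. (Under the stated assumptions on $F$, such a $\delta>0$ exists.) *)

theory Defs
  imports "HOL-Probability.Probability"
begin

type_synonym vtx = "int \<times> int"
(* the edge {u, u+(1,0)} is (u, False); the edge {u, u+(0,1)} is (u, True) *)
type_synonym edge = "vtx \<times> bool"

definition l1dist :: "vtx \<Rightarrow> vtx \<Rightarrow> int" where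
  "l1dist x y = \<bar>fst x - fst y\<bar> + \<bar>snd x - snd y\<bar>"

definition nn_path :: "vtx list \<Rightarrow> bool" where
  "nn_path p \<longleftrightarrow> p \<noteq> [] \<and> (\<forall>i. Suc i < length p \<longrightarrow> l1dist (p!i) (p!Suc i) = 1)"

definition nn_edge :: "vtx \<Rightarrow> vtx \<Rightarrow> edge" where
  "nn_edge u v =
     (if snd u = snd v then (if fst u \<le> fst v then (u, False) else (v, False))
      else (if snd u \<le> snd v then (u, True) else (v, True)))"

definition path_weight :: "(edge \<Rightarrow> real) \<Rightarrow> vtx list \<Rightarrow> real" where
  "path_weight \<omega> p = (\<Sum>i<length p - 1. \<omega> (nn_edge (p!i) (p!Suc i)))"

definition ballL :: "vtx \<Rightarrow> int \<Rightarrow> vtx set" where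
  "ballL z L = {x. l1dist x z \<le> L}"

definition bdryL :: "vtx \<Rightarrow> int \<Rightarrow> vtx set" where
  "bdryL z L = {x. l1dist x z = L}"

definition tiles :: "nat \<Rightarrow> vtx set" where
  "tiles L = {(2*i*int L + j*int L, j*int L) | i j. True}"

definition visits :: "vtx list \<Rightarrow> vtx \<Rightarrow> nat \<Rightarrow> bool" where
  "visits p z L \<longleftrightarrow> (\<exists>v\<in>set p. v \<in> ballL z (int L))"

definition A_event :: "real \<Rightarrow> real \<Rightarrow> nat \<Rightarrow> nat \<Rightarrow> vtx \<Rightarrow> (edge \<Rightarrow> real) \<Rightarrow> bool" where
  "A_event r \<delta> L m z \<omega> \<longleftrightarrow>
     (\<forall>p. nn_path p \<and> hd p \<in> ballL z (int L) \<and> last p \<in> bdryL z (int m * int L) \<longrightarrow>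
        path_weight \<omega> p \<ge> (real m - 1) * real L * (r + \<delta>))"

definition weights :: "real measure \<Rightarrow> (edge \<Rightarrow> real) measure" where
  "weights \<mu> = PiM UNIV (\<lambda>_. \<mu>)"

definition Fdist :: "real measure \<Rightarrow> real \<Rightarrow> real" where
  "Fdist \<mu> x = measure \<mu> {..x}"

definition r_min :: "real measure \<Rightarrow> real" where
  "r_min \<mu> = Inf {x. x \<ge> 0 \<and> Fdist \<mu> x > 0}"

definition bern_field :: "real \<Rightarrow> (edge \<Rightarrow> bool) measure" where
  "bern_field p = PiM UNIV (\<lambda>_. measure_pmf (bernoulli_pmf p))"

definition oriented_cluster :: "(edge \<Rightarrow> bool) \<Rightarrow> vtx set" where
  "oriented_cluster \<eta> = {v. \<exists>q. q \<noteq> [] \<and> hd q = (0,0) \<and> last q = v \<and>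
      (\<forall>i. Suc i < length q \<longrightarrow>
         (q!Suc i = (fst (q!i) + 1, snd (q!i)) \<and> \<eta> (q!i, False)) \<or>
         (q!Suc i = (fst (q!i), snd (q!i) + 1) \<and> \<eta> (q!i, True)))}"

definition theta_or :: "real \<Rightarrow> real" where
  "theta_or p = measure (bern_field p) {\<eta> \<in> space (bern_field p). infinite (oriented_cluster \<eta>)}"

definition pc_oriented :: real where
  "pc_oriented = Sup {p. 0 \<le> p \<and> p \<le> 1 \<and> theta_or p = 0}"

end

(* The argument is a Peierls-type estimate on a coarse-grained lattice.  In the coordinates
   (x + y, x - y) the tiles become a square grid, and a nearest-neighbour path from x to y
   visits the tiles along a walk of king moves, which contains a self-avoiding walk of
   n = \<lceil>|y - x| / 2L\<rceil> tiles.  If the path visits at most |y - x| / 8L good tiles, at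
   least n / 2 tiles of this walk are bad.  A bad tile forces the failure of a local version
   of A_{L,m}, which depends only on the weights in the ball of radius mL around the tile;
   tiles whose indices agree modulo m + 1 have disjoint such balls, so by independence and
   pigeonhole n / 2 bad tiles cost a factor eps^n, where P(A_{L,m}) > 1 - eps^(2(m+1)^2).
   Summing over the at most 9^n walks and 2^n sets of bad tiles leaves 2^-n for
   eps = 1/36.  The hypotheses on F only serve to produce delta in the paper. *)

theory Submission
  imports Defs
begin

section \<open>Tiles\<close>

lemma l1dist_commute: "l1dist x y = l1dist y x"
  unfolding l1dist_def by (simp add: abs_minus_commute)

lemma l1dist_triangle: "l1dist x z \<le> l1dist x y + l1dist y z"
  unfolding l1dist_def by arith

lemma l1dist_rotated:
  "l1dist x y = max \<bar>(fst x + snd x) - (fst y + snd y)\<bar> \<bar>(fst x - snd x) - (fst y - snd y)\<bar>"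
  unfolding l1dist_def by (simp add: max_def abs_if)

lemma abs_sub_round_le:
  fixes u L :: int
  assumes "L > 0"
  shows "\<bar>u - 2 * L * ((u + L) div (2 * L))\<bar> \<le> L"
proof -
  have "0 \<le> (u + L) mod (2 * L)" "(u + L) mod (2 * L) < 2 * L"
    using assms by simp_all
  moreover have "u + L = 2 * L * ((u + L) div (2 * L)) + (u + L) mod (2 * L)"
    by simp
  ultimately show ?thesis
    unfolding abs_le_iff by linarith
qed

text \<open>In the coordinates \<open>(x + y, x - y)\<close> the \<open>\<ell>\<^sup>1\<close>-norm becomes the sup-norm, and the tiles
  become the squares of side \<open>2L\<close> centred on \<open>2L\<int>\<^sup>2\<close>. A tile is indexed by \<open>t \<in> \<int>\<^sup>2\<close>,
  its centre \<open>L (a + b, a - b)\<close> is the point of \<open>V\<^sub>L\<close> with \<open>i = b, j = a - b\<close>, and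
  \<open>tile_index L v\<close> is the index of a tile containing \<open>v\<close>.\<close>

definition tile_index :: "nat \<Rightarrow> vtx \<Rightarrow> int \<times> int" where
  "tile_index L v =
     ((fst v + snd v + int L) div (2 * int L), (fst v - snd v + int L) div (2 * int L))"

definition tile_center :: "nat \<Rightarrow> int \<times> int \<Rightarrow> vtx" where
  "tile_center L t = (int L * (fst t + snd t), int L * (fst t - snd t))"

definition cheb_dist :: "int \<times> int \<Rightarrow> int \<times> int \<Rightarrow> int" where
  "cheb_dist s t = max \<bar>fst s - fst t\<bar> \<bar>snd s - snd t\<bar>"

definition king_adj :: "int \<times> int \<Rightarrow> int \<times> int \<Rightarrow> bool" where
  "king_adj s t \<longleftrightarrow> cheb_dist s t \<le> 1"

lemma tile_center_in_tiles: "tile_center L t \<in> tiles L"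
  unfolding tile_center_def tiles_def
  by (intro CollectI exI[of _ "snd t"] exI[of _ "fst t - snd t"]) (simp add: algebra_simps)

lemma inj_tile_center:
  assumes "L \<ge> 1"
  shows "inj (tile_center L)"
proof (rule injI)
  fix s t
  assume "tile_center L s = tile_center L t"
  then have "fst s + snd s = fst t + snd t" "fst s - snd s = fst t - snd t"
    using assms unfolding tile_center_def by auto
  then show "s = t"
    by (simp add: prod_eq_iff)
qed

lemma tile_center_rotated:
  "fst (tile_center L t) + snd (tile_center L t) = 2 * int L * fst t"
  "fst (tile_center L t) - snd (tile_center L t) = 2 * int L * snd t"
  unfolding tile_center_def by (simp_all add: algebra_simps)

lemma mem_ballL_tile_center:
  assumes "L \<ge> 1"
  shows "v \<in> ballL (tile_center L (tile_index L v)) (int L)"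
proof -
  have L: "int L > 0"
    using assms by simp
  show ?thesis
    using abs_sub_round_le[OF L, of "fst v + snd v"] abs_sub_round_le[OF L, of "fst v - snd v"]
    unfolding ballL_def l1dist_rotated tile_center_rotated tile_index_def
    by simp
qed

lemma l1dist_tile_center:
  "l1dist (tile_center L s) (tile_center L t) = 2 * int L * cheb_dist s t"
  unfolding l1dist_rotated tile_center_rotated cheb_dist_def
  by (simp add: right_diff_distrib[symmetric] abs_mult max_mult_distrib_left)

lemma l1dist_tile_index_bounds:
  assumes "L \<ge> 1"
  shows "l1dist x y \<le> 2 * int L * cheb_dist (tile_index L x) (tile_index L y) + 2 * int L"
    and "2 * int L * cheb_dist (tile_index L x) (tile_index L y) \<le> l1dist x y + 2 * int L"
proof -
  let ?cx = "tile_center L (tile_index L x)" and ?cy = "tile_center L (tile_index L y)"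
  have near: "l1dist x ?cx \<le> int L" "l1dist y ?cy \<le> int L"
    using mem_ballL_tile_center[OF assms] unfolding ballL_def by auto
  note centers = l1dist_tile_center[of L "tile_index L x" "tile_index L y"]
  show "l1dist x y \<le> 2 * int L * cheb_dist (tile_index L x) (tile_index L y) + 2 * int L"
    using near centers l1dist_triangle[of x y ?cx] l1dist_triangle[of ?cx y ?cy]
      l1dist_commute[of y ?cy] by linarith
  show "2 * int L * cheb_dist (tile_index L x) (tile_index L y) \<le> l1dist x y + 2 * int L"
    using near centers l1dist_triangle[of ?cx ?cy x] l1dist_triangle[of x ?cy y]
      l1dist_commute[of x ?cx] by linarith
qed

lemma king_adj_tile_index:
  assumes "L \<ge> 1" "l1dist u v = 1"
  shows "king_adj (tile_index L u) (tile_index L v)"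
proof (rule ccontr)
  let ?c = "cheb_dist (tile_index L u) (tile_index L v)"
  assume "\<not> king_adj (tile_index L u) (tile_index L v)"
  then have "2 * int L * 2 \<le> 2 * int L * ?c"
    unfolding king_adj_def by (intro mult_left_mono) auto
  then show False
    using l1dist_tile_index_bounds(2)[OF assms(1), of u v] assms by linarith
qed

section \<open>Walks of king moves\<close>

lemma cheb_dist_triangle: "cheb_dist a c \<le> cheb_dist a b + cheb_dist b c"
proof -
  have "\<bar>fst a - fst c\<bar> \<le> \<bar>fst a - fst b\<bar> + \<bar>fst b - fst c\<bar>"
    and "\<bar>snd a - snd c\<bar> \<le> \<bar>snd a - snd b\<bar> + \<bar>snd b - snd c\<bar>"
    by arith+
  moreover have "\<bar>fst a - fst b\<bar> \<le> cheb_dist a b" "\<bar>snd a - snd b\<bar> \<le> cheb_dist a b"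
    and "\<bar>fst b - fst c\<bar> \<le> cheb_dist b c" "\<bar>snd b - snd c\<bar> \<le> cheb_dist b c"
    unfolding cheb_dist_def by auto
  ultimately show ?thesis
    unfolding cheb_dist_def[of a c] by linarith
qed

lemma cheb_dist_hd_last:
  "successively king_adj w \<Longrightarrow> w \<noteq> [] \<Longrightarrow> cheb_dist (hd w) (last w) \<le> int (length w) - 1"
proof (induction w rule: induct_list012)
  case (2 s)
  then show ?case
    by (simp add: cheb_dist_def)
next
  case (3 s t w)
  have "cheb_dist s (last (t # w)) \<le> cheb_dist s t + cheb_dist t (last (t # w))"
    by (rule cheb_dist_triangle)
  then show ?case
    using 3 by (simp add: king_adj_def)
qed simp

lemma successively_distinct_shortcut:
  assumes "successively R w" "w \<noteq> []"
  obtains v where "successively R v" "v \<noteq> []" "hd v = hd w" "last v = last w"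
    "set v \<subseteq> set w" "distinct v"
  using assms
proof (induction "length w" arbitrary: w rule: less_induct)
  case less
  show ?case
  proof (cases "distinct w")
    case True
    then show ?thesis
      using less.prems by blast
  next
    case False
    then obtain xs y ys zs where w: "w = xs @ [y] @ ys @ [y] @ zs"
      using not_distinct_decomp by blast
    let ?w = "xs @ [y] @ zs"
    have shorter: "length ?w < length w" and "?w \<noteq> []" "set ?w \<subseteq> set w"
      unfolding w by auto
    moreover have "hd ?w = hd w" "last ?w = last w"
      unfolding w by (cases xs; cases zs; simp)+
    moreover have "successively R ?w"
      using less.prems(2) unfolding w by (auto simp: successively_append_iff successively_Cons)
    ultimately show ?thesis
      using less.hyps[OF shorter] less.prems(1) by (metis order.trans)
  qed
qed

definition king_walks :: "nat \<Rightarrow> int \<times> int \<Rightarrow> (int \<times> int) list set" where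
  "king_walks n s = {w. length w = n \<and> hd w = s \<and> successively king_adj w}"

lemma king_neighbours_subset:
  "{t. king_adj s t} \<subseteq> {fst s - 1..fst s + 1} \<times> {snd s - 1..snd s + 1}"
  unfolding king_adj_def cheb_dist_def by (auto simp: abs_le_iff)

lemma finite_king_neighbours: "finite {t. king_adj s t}"
  using king_neighbours_subset by (rule finite_subset) simp

lemma card_king_neighbours: "card {t. king_adj s t} \<le> 9"
proof -
  have "card {t. king_adj s t} \<le> card ({fst s - 1..fst s + 1} \<times> {snd s - 1..snd s + 1})"
    using king_neighbours_subset by (rule card_mono[rotated]) simp
  then show ?thesis
    by (simp add: card_cartesian_product)
qed

lemma king_walks_Suc_Suc:
  "king_walks (Suc (Suc n)) s \<subseteq> (\<Union>t\<in>{t. king_adj s t}. (#) s ` king_walks (Suc n) t)"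
proof
  fix w
  assume "w \<in> king_walks (Suc (Suc n)) s"
  then obtain t v where "w = s # t # v" "king_adj s t" "t # v \<in> king_walks (Suc n) t"
    unfolding king_walks_def by (auto simp: length_Suc_conv)
  then show "w \<in> (\<Union>t\<in>{t. king_adj s t}. (#) s ` king_walks (Suc n) t)"
    by blast
qed

lemma king_walks_finite_card:
  "finite (king_walks (Suc n) s) \<and> card (king_walks (Suc n) s) \<le> 9 ^ n"
proof (induction n arbitrary: s)
  case 0
  have "king_walks (Suc 0) s = {[s]}"
    unfolding king_walks_def by (auto simp: length_Suc_conv)
  then show ?case
    by simp
next
  case (Suc n)
  let ?U = "\<Union>t\<in>{t. king_adj s t}. (#) s ` king_walks (Suc n) t"
  have "finite ?U"
    using Suc.IH finite_king_neighbours by blast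
  have "card ?U \<le> (\<Sum>t\<in>{t. king_adj s t}. card ((#) s ` king_walks (Suc n) t))"
    by (rule card_UN_le[OF finite_king_neighbours])
  also have "\<dots> \<le> (\<Sum>t\<in>{t. king_adj s t}. 9 ^ n)"
    using Suc.IH by (intro sum_mono) (metis card_image_le order.trans)
  also have "\<dots> \<le> 9 ^ Suc n"
    using card_king_neighbours[of s] by simp
  finally show ?case
    using king_walks_Suc_Suc[of n s] \<open>finite ?U\<close>
    by (meson card_mono finite_subset order.trans)
qed

lemma king_walks_0: "king_walks 0 s \<subseteq> {[]}"
  unfolding king_walks_def by auto

lemma finite_king_walks: "finite (king_walks n s)"
proof (cases n)
  case 0
  then show ?thesis
    using finite_subset[OF king_walks_0] by simp
next
  case (Suc n')
  then show ?thesis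
    using king_walks_finite_card[of n' s] by simp
qed

lemma card_king_walks_le: "card (king_walks n s) \<le> 9 ^ n"
proof (cases n)
  case 0
  then show ?thesis
    using card_mono[OF _ king_walks_0, of s] by simp
next
  case (Suc n')
  then show ?thesis
    using king_walks_finite_card[of n' s] power_increasing[of n' n "9 :: nat"] by simp
qed

lemma take_mem_king_walks:
  assumes "successively king_adj v" "1 \<le> n" "n \<le> length v"
  shows "take n v \<in> king_walks n (hd v)"
proof -
  have "successively king_adj (take n v)"
    using assms(1) successively_append_iff[of king_adj "take n v" "drop n v"] by simp
  moreover have "hd (take n v) = hd v"
    using assms(2,3) by (cases v; cases n) simp_all
  ultimately show ?thesis
    using assms(3) unfolding king_walks_def by simp
qed

lemma l1dist_le_king_walk_length:
  assumes "L \<ge> 1" "successively king_adj v" "v \<noteq> []"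
    and "hd v = tile_index L x" "last v = tile_index L y"
  shows "l1dist x y \<le> 2 * int L * int (length v)"
proof -
  have "l1dist x y \<le> 2 * int L * cheb_dist (hd v) (last v) + 2 * int L"
    using l1dist_tile_index_bounds(1)[OF assms(1)] assms(4,5) by simp
  also have "\<dots> \<le> 2 * int L * (int (length v) - 1) + 2 * int L"
    using cheb_dist_hd_last[OF assms(2,3)] by (intro add_right_mono mult_left_mono) auto
  finally show ?thesis
    by (simp add: algebra_simps)
qed

section \<open>Localising the event \<open>A\<^sub>L\<^sub>,\<^sub>m(z)\<close>\<close>

lemma l1dist_nn_path_step:
  assumes "nn_path p" "Suc j < length p"
  shows "l1dist (p ! Suc j) z \<le> l1dist (p ! j) z + 1"
proof -
  have "l1dist (p ! j) (p ! Suc j) = 1"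
    using assms unfolding nn_path_def by blast
  then show ?thesis
    using l1dist_triangle[of "p ! Suc j" z "p ! j"] l1dist_commute[of "p ! j" "p ! Suc j"]
    by linarith
qed

lemma nn_path_take: "nn_path p \<Longrightarrow> 0 < n \<Longrightarrow> nn_path (take n p)"
  unfolding nn_path_def by auto

lemma path_weight_take_le:
  assumes "\<forall>e. 0 \<le> \<omega> e"
  shows "path_weight \<omega> (take n p) \<le> path_weight \<omega> p"
proof -
  have "path_weight \<omega> (take n p) = (\<Sum>k<min n (length p) - 1. \<omega> (nn_edge (p ! k) (p ! Suc k)))"
    unfolding path_weight_def by (intro sum.cong) auto
  also have "\<dots> \<le> path_weight \<omega> p"
    unfolding path_weight_def by (intro sum_mono2) (auto intro: assms[rule_format])
  finally show ?thesis .
qed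

lemma first_exit_prefix:
  assumes p: "nn_path p" and start: "hd p \<in> ballL z L" and stop: "last p \<in> bdryL z R"
    and "L < R"
  obtains k where "k < length p" "set (take (Suc k) p) \<subseteq> ballL z R" "p ! k \<in> bdryL z R"
proof -
  have "p \<noteq> []"
    using p unfolding nn_path_def by simp
  let ?exit = "\<lambda>k. k < length p \<and> p ! k \<in> bdryL z R"
  define k where "k = (LEAST k. ?exit k)"
  have "?exit (length p - 1)"
    using stop \<open>p \<noteq> []\<close> by (simp add: last_conv_nth)
  then have exit: "?exit k"
    unfolding k_def by (rule LeastI)
  have inside: "l1dist (p ! j) z < R" if "j < k" for j
    using that
  proof (induction j)
    case 0
    then show ?case
      using start \<open>p \<noteq> []\<close> \<open>L < R\<close> unfolding ballL_def by (simp add: hd_conv_nth)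
  next
    case (Suc j)
    have "\<not> ?exit (Suc j)"
      using Suc.prems unfolding k_def by (rule not_less_Least)
    then show ?case
      using Suc l1dist_nn_path_step[OF p, of j z] exit unfolding bdryL_def by fastforce
  qed
  have "set (take (Suc k) p) \<subseteq> ballL z R"
  proof
    fix v
    assume "v \<in> set (take (Suc k) p)"
    then obtain j where "j < Suc k" "v = p ! j"
      using exit by (auto simp: in_set_conv_nth)
    then show "v \<in> ballL z R"
      using inside[of j] exit unfolding ballL_def bdryL_def by (cases "j = k") auto
  qed
  then show ?thesis
    using exit that by blast
qed

text \<open>\<open>A_local\<close> only constrains paths inside the outer ball, hence depends only on the weights
  of the edges of that ball.\<close>

definition A_local :: "real \<Rightarrow> int \<Rightarrow> int \<Rightarrow> vtx \<Rightarrow> (edge \<Rightarrow> real) \<Rightarrow> bool" where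
  "A_local c L R z \<omega> \<longleftrightarrow>
     (\<forall>p. nn_path p \<and> set p \<subseteq> ballL z R \<and> hd p \<in> ballL z L \<and> last p \<in> bdryL z R
        \<longrightarrow> c \<le> path_weight \<omega> p)"

definition ball_edges :: "int \<Rightarrow> vtx \<Rightarrow> edge set" where
  "ball_edges R z = {nn_edge u v | u v. u \<in> ballL z R \<and> v \<in> ballL z R \<and> l1dist u v = 1}"

lemma A_event_imp_A_local:
  "A_event r \<delta> L m z \<omega> \<Longrightarrow> A_local ((real m - 1) * real L * (r + \<delta>)) (int L) (int m * int L) z \<omega>"
  unfolding A_event_def A_local_def by blast

lemma A_local_imp_A_event:
  assumes "\<forall>e. 0 \<le> \<omega> e" and "m \<ge> 2" "L \<ge> 1"
    and "A_local ((real m - 1) * real L * (r + \<delta>)) (int L) (int m * int L) z \<omega>"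
  shows "A_event r \<delta> L m z \<omega>"
  unfolding A_event_def
proof (intro allI impI)
  fix p
  assume p: "nn_path p \<and> hd p \<in> ballL z (int L) \<and> last p \<in> bdryL z (int m * int L)"
  have "int L < int m * int L"
    using assms(2,3) by simp
  then obtain k where k: "k < length p" "set (take (Suc k) p) \<subseteq> ballL z (int m * int L)"
    "p ! k \<in> bdryL z (int m * int L)"
    using first_exit_prefix p by blast
  moreover have "hd (take (Suc k) p) = hd p"
    using k(1) by (cases p) auto
  moreover have "last (take (Suc k) p) = p ! k"
    using k(1) by (simp add: take_Suc_conv_app_nth)
  ultimately have "(real m - 1) * real L * (r + \<delta>) \<le> path_weight \<omega> (take (Suc k) p)"
    using assms(4) p nn_path_take[of p "Suc k"] unfolding A_local_def by simp
  also have "\<dots> \<le> path_weight \<omega> p"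
    using path_weight_take_le[OF assms(1)] .
  finally show "(real m - 1) * real L * (r + \<delta>) \<le> path_weight \<omega> p" .
qed

lemma nn_edge_in_ball_edges:
  assumes "nn_path p" "set p \<subseteq> ballL z R" "Suc k < length p"
  shows "nn_edge (p ! k) (p ! Suc k) \<in> ball_edges R z"
proof -
  have "l1dist (p ! k) (p ! Suc k) = 1"
    using assms(1,3) unfolding nn_path_def by blast
  then show ?thesis
    using assms(2,3) nth_mem[of k p] nth_mem[of "Suc k" p] unfolding ball_edges_def by fastforce
qed

lemma A_local_restrict: "A_local c L R z (restrict \<omega> (ball_edges R z)) \<longleftrightarrow> A_local c L R z \<omega>"
proof -
  have "path_weight (restrict \<omega> (ball_edges R z)) p = path_weight \<omega> p"
    if "nn_path p" "set p \<subseteq> ballL z R" for p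
    unfolding path_weight_def using nn_edge_in_ball_edges[OF that] by (intro sum.cong) auto
  then show ?thesis
    unfolding A_local_def by metis
qed

lemma fst_mem_ball_edges:
  assumes "e \<in> ball_edges R z"
  shows "fst e \<in> ballL z R"
proof -
  obtain u v where "e = nn_edge u v" "u \<in> ballL z R" "v \<in> ballL z R"
    using assms unfolding ball_edges_def by blast
  then show ?thesis
    unfolding nn_edge_def by auto
qed

lemma ball_edges_disjoint:
  assumes "2 * R < l1dist z z'"
  shows "ball_edges R z \<inter> ball_edges R z' = {}"
proof (intro equals0I)
  fix e
  assume "e \<in> ball_edges R z \<inter> ball_edges R z'"
  then have "l1dist (fst e) z \<le> R" "l1dist (fst e) z' \<le> R"
    using fst_mem_ball_edges unfolding ballL_def by auto
  then show False
    using assms l1dist_triangle[of z z' "fst e"] l1dist_commute[of z "fst e"] by linarith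
qed

section \<open>Translation invariance\<close>

definition shift_weights :: "vtx \<Rightarrow> (edge \<Rightarrow> real) \<Rightarrow> edge \<Rightarrow> real" where
  "shift_weights a \<omega> e = \<omega> (fst e + a, snd e)"

lemma nn_edge_translate: "nn_edge (u + a) (v + a) = (fst (nn_edge u v) + a, snd (nn_edge u v))"
  unfolding nn_edge_def by simp

lemma path_weight_translate:
  "path_weight \<omega> (map (\<lambda>u. u + a) p) = path_weight (shift_weights a \<omega>) p"
  unfolding path_weight_def shift_weights_def by (simp add: nn_edge_translate)

lemma A_event_translate:
  assumes "A_event r \<delta> L m z \<omega>"
  shows "A_event r \<delta> L m (z - a) (shift_weights a \<omega>)"
  unfolding A_event_def
proof (intro allI impI)
  fix p
  assume p: "nn_path p \<and> hd p \<in> ballL (z - a) (int L) \<and> last p \<in> bdryL (z - a) (int m * int L)"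
  let ?q = "map (\<lambda>u. u + a) p"
  have "l1dist (u + a) (v + a) = l1dist u v" for u v
    unfolding l1dist_def by simp
  then have "nn_path ?q"
    using p unfolding nn_path_def by simp
  have "l1dist (u + a) z = l1dist u (z - a)" for u
    unfolding l1dist_def by simp
  moreover have "p \<noteq> []"
    using p unfolding nn_path_def by simp
  ultimately have "hd ?q \<in> ballL z (int L) \<and> last ?q \<in> bdryL z (int m * int L)"
    using p unfolding ballL_def bdryL_def by (simp add: hd_map last_map)
  with \<open>nn_path ?q\<close> show "(real m - 1) * real L * (r + \<delta>) \<le> path_weight (shift_weights a \<omega>) p"
    using assms unfolding A_event_def path_weight_translate[symmetric] by simp
qed
lemma A_event_iff_origin: "A_event r \<delta> L m z \<omega> \<longleftrightarrow> A_event r \<delta> L m 0 (shift_weights z \<omega>)"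
proof
  show "A_event r \<delta> L m z \<omega> \<Longrightarrow> A_event r \<delta> L m 0 (shift_weights z \<omega>)"
    using A_event_translate[of r \<delta> L m z \<omega> z] by simp
  have "shift_weights (- z) (shift_weights z \<omega>) = \<omega>"
    unfolding shift_weights_def by (simp add: fun_eq_iff)
  then show "A_event r \<delta> L m 0 (shift_weights z \<omega>) \<Longrightarrow> A_event r \<delta> L m z \<omega>"
    using A_event_translate[of r \<delta> L m 0 "shift_weights z \<omega>" "- z"] by simp
qed

section \<open>Colouring the tiles\<close>

text \<open>Distinct tiles of the same colour are so far apart that their outer balls of radius
  \<open>mL\<close> share no edge, so their local events are independent.\<close>

definition colour :: "nat \<Rightarrow> int \<times> int \<Rightarrow> int \<times> int" where
  "colour m t = (fst t mod (int m + 1), snd t mod (int m + 1))"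

lemma colour_range: "colour m t \<in> {0..int m} \<times> {0..int m}"
proof -
  have "a mod (int m + 1) \<in> {0..int m}" for a
    using pos_mod_bound[of "int m + 1" a] by simp
  then show ?thesis
    unfolding colour_def by simp
qed

lemma cheb_dist_same_colour:
  assumes "s \<noteq> t" "colour m s = colour m t"
  shows "int m + 1 \<le> cheb_dist s t"
proof -
  have far: "int m + 1 \<le> \<bar>a - b\<bar>" if "a mod (int m + 1) = b mod (int m + 1)" "a \<noteq> b" for a b
    using that dvd_imp_le_int[of "a - b" "int m + 1"] by (simp add: mod_eq_dvd_iff)
  show ?thesis
  proof (cases "fst s = fst t")
    case True
    then have "snd s \<noteq> snd t"
      using assms(1) by (simp add: prod_eq_iff)
    then show ?thesis
      using far[of "snd s" "snd t"] assms(2) unfolding colour_def cheb_dist_def by simp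
  next
    case False
    then show ?thesis
      using far[of "fst s" "fst t"] assms(2) unfolding colour_def cheb_dist_def by simp
  qed
qed

lemma ball_edges_disjoint_same_colour:
  assumes "L \<ge> 1" "s \<noteq> t" "colour m s = colour m t"
  shows "ball_edges (int m * int L) (tile_center L s) \<inter> ball_edges (int m * int L) (tile_center L t) = {}"
proof (rule ball_edges_disjoint)
  have "2 * (int m * int L) < 2 * int L * (int m + 1)"
    using assms(1) by (simp add: algebra_simps)
  also have "\<dots> \<le> 2 * int L * cheb_dist s t"
    using cheb_dist_same_colour[OF assms(2,3)] by (intro mult_left_mono) auto
  finally show "2 * (int m * int L) < l1dist (tile_center L s) (tile_center L t)"
    unfolding l1dist_tile_center .
qed

lemma pigeonhole_fibre:
  assumes "finite K" "K \<noteq> {}" "f ` A \<subseteq> K"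
  obtains k where "k \<in> K" "card A \<le> card K * card {x \<in> A. f x = k}"
proof -
  define g where "g k = card {x \<in> A. f x = k}" for k
  have "Max (g ` K) \<in> g ` K"
    using assms(1,2) by (intro Max_in) auto
  then obtain k where "k \<in> K" "g k = Max (g ` K)"
    by (metis imageE)
  then have k: "k \<in> K" "\<And>k'. k' \<in> K \<Longrightarrow> g k' \<le> g k"
    using assms(1) by auto
  have "card A = card (\<Union>k'\<in>K. {x \<in> A. f x = k'})"
    using assms(3) by (intro arg_cong[where f = card]) blast
  also have "\<dots> \<le> (\<Sum>k'\<in>K. g k')"
    unfolding g_def by (rule card_UN_le[OF assms(1)])
  also have "\<dots> \<le> (\<Sum>k'\<in>K. g k)"
    using k(2) by (rule sum_mono)
  finally show ?thesis
    using that k(1) by (simp add: g_def)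
qed

section \<open>Independent edge weights\<close>

locale iid_weights =
  fixes \<mu> :: "real measure"
  assumes prob_space_\<mu>: "prob_space \<mu>" and sets_\<mu>: "sets \<mu> = sets borel"
begin

sublocale W: prob_space "weights \<mu>"
  unfolding weights_def using prob_space_\<mu> by (intro prob_space_PiM) auto

lemma space_weights: "space (weights \<mu>) = UNIV"
proof -
  have "space \<mu> = UNIV"
    using sets_eq_imp_space_eq[OF sets_\<mu>] by simp
  then show ?thesis
    unfolding weights_def by (simp add: space_PiM PiE_UNIV_domain)
qed

lemma measurable_path_weight:
  assumes "\<And>k. Suc k < length p \<Longrightarrow> nn_edge (p ! k) (p ! Suc k) \<in> E"
  shows "(\<lambda>\<omega>. path_weight \<omega> p) \<in> borel_measurable (PiM E (\<lambda>_. \<mu>))"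
proof -
  have "(\<lambda>\<omega>. \<omega> e) \<in> borel_measurable (PiM E (\<lambda>_. \<mu>))" if "e \<in> E" for e
    using measurable_component_singleton[OF that, of "\<lambda>_. \<mu>"] measurable_cong_sets[OF refl sets_\<mu>]
    by blast
  then show ?thesis
    unfolding path_weight_def using assms by (intro borel_measurable_sum) auto
qed

lemma sets_A_event: "{\<omega> \<in> space (weights \<mu>). A_event r \<delta> L m z \<omega>} \<in> sets (weights \<mu>)"
proof -
  have "Measurable.pred (weights \<mu>) (\<lambda>\<omega>. \<forall>p.
      nn_path p \<and> hd p \<in> ballL z (int L) \<and> last p \<in> bdryL z (int m * int L) \<longrightarrow>
      (real m - 1) * real L * (r + \<delta>) \<le> path_weight \<omega> p)"
  proof (intro pred_intros_countable)
    fix p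
    have "(\<lambda>\<omega>. path_weight \<omega> p) \<in> borel_measurable (weights \<mu>)"
      unfolding weights_def by (rule measurable_path_weight) simp
    then show "Measurable.pred (weights \<mu>) (\<lambda>\<omega>.
        nn_path p \<and> hd p \<in> ballL z (int L) \<and> last p \<in> bdryL z (int m * int L) \<longrightarrow>
        (real m - 1) * real L * (r + \<delta>) \<le> path_weight \<omega> p)"
      by measurable
  qed
  then show ?thesis
    unfolding A_event_def by simp
qed

lemma pred_A_local: "Measurable.pred (PiM (ball_edges R z) (\<lambda>_. \<mu>)) (A_local c L R z)"
  unfolding A_local_def
proof (intro pred_intros_countable)
  fix p
  show "Measurable.pred (PiM (ball_edges R z) (\<lambda>_. \<mu>)) (\<lambda>\<omega>.
      nn_path p \<and> set p \<subseteq> ballL z R \<and> hd p \<in> ballL z L \<and> last p \<in> bdryL z R \<longrightarrow>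
      c \<le> path_weight \<omega> p)"
  proof (cases "nn_path p \<and> set p \<subseteq> ballL z R")
    case True
    then have "(\<lambda>\<omega>. path_weight \<omega> p) \<in> borel_measurable (PiM (ball_edges R z) (\<lambda>_. \<mu>))"
      by (intro measurable_path_weight nn_edge_in_ball_edges) auto
    then show ?thesis
      by measurable
  next
    case False
    then have "(\<lambda>\<omega> :: edge \<Rightarrow> real. nn_path p \<and> set p \<subseteq> ballL z R \<and> hd p \<in> ballL z L \<and>
        last p \<in> bdryL z R \<longrightarrow> c \<le> path_weight \<omega> p) = (\<lambda>_. True)"
      by auto
    then show ?thesis
      by simp
  qed
qed

lemma sets_not_A_local: "{\<omega>. \<not> A_local c L R z \<omega>} \<in> sets (weights \<mu>)"
proof -
  have "(\<lambda>\<omega>. restrict \<omega> (ball_edges R z)) \<in> measurable (weights \<mu>) (PiM (ball_edges R z) (\<lambda>_. \<mu>))"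
    unfolding weights_def by (rule measurable_restrict_subset) simp
  moreover have "Measurable.pred (PiM (ball_edges R z) (\<lambda>_. \<mu>)) (\<lambda>g. \<not> A_local c L R z g)"
    using pred_A_local by measurable
  ultimately have "Measurable.pred (weights \<mu>) (\<lambda>\<omega>. \<not> A_local c L R z (restrict \<omega> (ball_edges R z)))"
    by measurable
  then have "{\<omega> \<in> space (weights \<mu>). \<not> A_local c L R z \<omega>} \<in> sets (weights \<mu>)"
    by (simp add: A_local_restrict)
  then show ?thesis
    by (simp add: space_weights)
qed

lemma prob_A_event_translate:
  "measure (weights \<mu>) {\<omega> \<in> space (weights \<mu>). A_event r \<delta> L m z \<omega>} =
   measure (weights \<mu>) {\<omega> \<in> space (weights \<mu>). A_event r \<delta> L m 0 \<omega>}"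
proof -
  let ?f = "\<lambda>e :: edge. (fst e + z, snd e)"
  have "inj ?f"
    by (rule injI) (auto simp: prod_eq_iff)
  then have "distr (weights \<mu>) (weights \<mu>) (\<lambda>\<omega>. \<lambda>e\<in>UNIV. \<omega> (?f e)) = weights \<mu>"
    unfolding weights_def using distr_PiM_reindex[of UNIV "\<lambda>_. \<mu>" ?f UNIV] prob_space_\<mu> by simp
  moreover have "(\<lambda>\<omega>. \<lambda>e\<in>UNIV. \<omega> (?f e)) = shift_weights z"
    unfolding shift_weights_def by (simp add: fun_eq_iff)
  ultimately have shift: "distr (weights \<mu>) (weights \<mu>) (shift_weights z) = weights \<mu>"
    by simp
  have "shift_weights z \<in> measurable (weights \<mu>) (weights \<mu>)"
    unfolding weights_def shift_weights_def
    by (intro measurable_PiM_single') (auto simp: space_PiM)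
  then show ?thesis
    using measure_distr[OF _ sets_A_event, of "shift_weights z" "weights \<mu>" r \<delta> L m 0] shift
    by (simp add: A_event_iff_origin[of r \<delta> L m z] space_weights vimage_def)
qed

lemma negative_weights_null:
  assumes "emeasure \<mu> {..<0} = 0"
  shows "{\<omega>. \<exists>e. \<omega> e < 0} \<in> null_sets (weights \<mu>)"
proof -
  have "{\<omega> \<in> space (weights \<mu>). \<omega> e < 0} \<in> null_sets (weights \<mu>)" for e
  proof -
    have m: "(\<lambda>\<omega>. \<omega> e) \<in> measurable (weights \<mu>) \<mu>"
      unfolding weights_def by (rule measurable_component_singleton) simp
    have "distr (weights \<mu>) \<mu> (\<lambda>\<omega>. \<omega> e) = \<mu>"
      unfolding weights_def using distr_PiM_component[of UNIV "\<lambda>_. \<mu>" e] prob_space_\<mu> by simp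
    then have "emeasure (weights \<mu>) ((\<lambda>\<omega>. \<omega> e) -` {..<0} \<inter> space (weights \<mu>)) = 0"
      using emeasure_distr[OF m, of "{..<0}"] assms sets_\<mu> by simp
    moreover have "{\<omega> \<in> space (weights \<mu>). \<omega> e < 0} \<in> sets (weights \<mu>)"
      using m sets_\<mu> by measurable
    ultimately show ?thesis
      by (simp add: null_sets_def vimage_def Int_def conj_commute)
  qed
  moreover have "{\<omega>. \<exists>e. \<omega> e < 0} = (\<Union>e. {\<omega> \<in> space (weights \<mu>). \<omega> e < 0})"
    by (auto simp: space_weights)
  ultimately show ?thesis
    by (auto intro: null_sets_UN')
qed

lemma indep_vars_components: "W.indep_vars (\<lambda>_. \<mu>) (\<lambda>e \<omega>. \<omega> e) UNIV"
proof -
  have "(\<lambda>\<omega>. \<omega> e) \<in> measurable (weights \<mu>) \<mu>" for e :: edge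
    unfolding weights_def by (rule measurable_component_singleton) simp
  moreover have "distr (weights \<mu>) \<mu> (\<lambda>\<omega>. \<omega> e) = \<mu>" for e :: edge
    unfolding weights_def using distr_PiM_component[of UNIV "\<lambda>_. \<mu>" e] prob_space_\<mu> by simp
  moreover have "(\<lambda>\<omega> :: edge \<Rightarrow> real. \<lambda>e\<in>UNIV. \<omega> e) = (\<lambda>\<omega>. \<omega>)"
    by (simp add: fun_eq_iff)
  ultimately show ?thesis
    by (subst W.indep_vars_iff_distr_eq_PiM) (auto simp: weights_def)
qed

lemma prob_Inter_not_A_local:
  assumes "finite T" "T \<noteq> {}" "disjoint_family_on (\<lambda>t. ball_edges R (z t)) T"
  shows "measure (weights \<mu>) (\<Inter>t\<in>T. {\<omega>. \<not> A_local c L R (z t) \<omega>}) =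
    (\<Prod>t\<in>T. measure (weights \<mu>) {\<omega>. \<not> A_local c L R (z t) \<omega>})"
proof -
  define S where "S t = {g \<in> space (PiM (ball_edges R (z t)) (\<lambda>_. \<mu>)). \<not> A_local c L R (z t) g}" for t
  have sets_S: "S t \<in> sets (PiM (ball_edges R (z t)) (\<lambda>_. \<mu>))" for t
    unfolding S_def using pred_A_local by measurable
  have indep: "W.indep_vars (\<lambda>t. PiM (ball_edges R (z t)) (\<lambda>_. \<mu>))
      (\<lambda>t \<omega>. restrict (\<lambda>e. \<omega> e) (ball_edges R (z t))) T"
    by (rule W.indep_vars_restrict[OF indep_vars_components _ assms(3)]) auto
  have preimage: "(\<lambda>\<omega>. restrict \<omega> (ball_edges R (z t))) -` S t \<inter> space (weights \<mu>) =
      {\<omega>. \<not> A_local c L R (z t) \<omega>}" for t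
    unfolding S_def using sets_eq_imp_space_eq[OF sets_\<mu>]
    by (auto simp: space_weights space_PiM A_local_restrict)
  show ?thesis
    using W.indep_varsD[OF indep assms(2,1) subset_refl sets_S] unfolding preimage by simp
qed

end

section \<open>Paths crossing few good tiles\<close>

lemma finite_ballL: "finite (ballL z R)"
proof -
  have "ballL z R \<subseteq> {fst z - R..fst z + R} \<times> {snd z - R..snd z + R}"
    unfolding ballL_def l1dist_def by (auto simp: abs_le_iff)
  then show ?thesis
    by (rule finite_subset) simp
qed

lemma tile_walk_of_path:
  assumes "L \<ge> 1" "nn_path p" "1 \<le> n"
    and "n \<le> nat \<lceil>real_of_int (l1dist (hd p) (last p)) / (2 * real L)\<rceil>"
  obtains w where "w \<in> king_walks n (tile_index L (hd p))" "distinct w" "set w \<subseteq> tile_index L ` set p"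
proof -
  have "p \<noteq> []"
    using assms(2) unfolding nn_path_def by simp
  have "successively king_adj (map (tile_index L) p)"
    using assms(1,2) king_adj_tile_index unfolding successively_conv_nth nn_path_def by auto
  moreover have "map (tile_index L) p \<noteq> []"
    using \<open>p \<noteq> []\<close> by simp
  ultimately obtain v where v: "successively king_adj v" "v \<noteq> []" "hd v = hd (map (tile_index L) p)"
    "last v = last (map (tile_index L) p)" "set v \<subseteq> set (map (tile_index L) p)" "distinct v"
    by (rule successively_distinct_shortcut)
  have "l1dist (hd p) (last p) \<le> 2 * int L * int (length v)"
    using l1dist_le_king_walk_length[OF assms(1) v(1,2)] v(3,4) \<open>p \<noteq> []\<close> by (simp add: hd_map last_map)
  then have "real_of_int (l1dist (hd p) (last p)) \<le> real_of_int (2 * int L * int (length v))"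
    by (simp only: of_int_le_iff)
  then have "real_of_int (l1dist (hd p) (last p)) / (2 * real L) \<le> real (length v)"
    using assms(1) by (simp add: divide_le_eq mult.commute)
  then have "n \<le> length v"
    using assms(4) by linarith
  then have "take n v \<in> king_walks n (tile_index L (hd p))"
    using take_mem_king_walks[OF v(1) assms(3)] v(3) \<open>p \<noteq> []\<close> by (simp add: hd_map)
  moreover have "distinct (take n v)" "set (take n v) \<subseteq> tile_index L ` set p"
    using v(5,6) set_take_subset[of n v] by auto
  ultimately show ?thesis
    using that by blast
qed

lemma card_A_event_tiles_le:
  assumes "L \<ge> 1" "T \<subseteq> tile_index L ` set p"
  shows "card {t \<in> T. A_event r \<delta> L m (tile_center L t) \<omega>}
    \<le> card {z \<in> tiles L. visits p z L \<and> A_event r \<delta> L m z \<omega>}"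
proof -
  let ?G = "{t \<in> T. A_event r \<delta> L m (tile_center L t) \<omega>}"
  let ?Z = "{z \<in> tiles L. visits p z L \<and> A_event r \<delta> L m z \<omega>}"
  have "?Z \<subseteq> (\<Union>v\<in>set p. ballL v (int L))"
    unfolding visits_def ballL_def by (auto simp: l1dist_commute)
  then have "finite ?Z"
    by (rule finite_subset) (simp add: finite_ballL)
  moreover have "tile_center L ` ?G \<subseteq> ?Z"
  proof
    fix z
    assume "z \<in> tile_center L ` ?G"
    then obtain t where t: "t \<in> T" "z = tile_center L t" "A_event r \<delta> L m z \<omega>"
      by blast
    then obtain v where "v \<in> set p" "t = tile_index L v"
      using assms(2) by blast
    then have "visits p z L"
      using mem_ballL_tile_center[OF assms(1), of v] t(2) unfolding visits_def by blast
    then show "z \<in> ?Z"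
      using t(2,3) tile_center_in_tiles by simp
  qed
  ultimately have "card (tile_center L ` ?G) \<le> card ?Z"
    by (rule card_mono)
  then show ?thesis
    using inj_tile_center[OF assms(1)] by (simp add: card_image inj_on_subset)
qed

definition local_failure :: "real \<Rightarrow> nat \<Rightarrow> nat \<Rightarrow> int \<times> int \<Rightarrow> (edge \<Rightarrow> real) set" where
  "local_failure c L m t = {\<omega>. \<not> A_local c (int L) (int m * int L) (tile_center L t) \<omega>}"

definition half_failed_walks :: "real \<Rightarrow> nat \<Rightarrow> nat \<Rightarrow> nat \<Rightarrow> int \<times> int \<Rightarrow> (edge \<Rightarrow> real) set" where
  "half_failed_walks c L m n s =
     (\<Union>w \<in> {w \<in> king_walks n s. distinct w}. \<Union>B \<in> {B. B \<subseteq> set w \<and> n \<le> 2 * card B}.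
        \<Inter>t\<in>B. local_failure c L m t)"

lemma mem_half_failed_walks:
  assumes "L \<ge> 1" "m \<ge> 2" "\<forall>e. 0 \<le> \<omega> e" "nn_path p" "1 \<le> n"
    and n: "n = nat \<lceil>real_of_int (l1dist (hd p) (last p)) / (2 * real L)\<rceil>"
    and few: "real (card {z \<in> tiles L. visits p z L \<and> A_event r \<delta> L m z \<omega>})
      \<le> 1 / (8 * real L) * real_of_int (l1dist (hd p) (last p))"
  shows "\<omega> \<in> half_failed_walks ((real m - 1) * real L * (r + \<delta>)) L m n (tile_index L (hd p))"
proof -
  obtain w where w: "w \<in> king_walks n (tile_index L (hd p))" "distinct w" "set w \<subseteq> tile_index L ` set p"
    using tile_walk_of_path[OF assms(1,4,5)] n by blast
  define G where "G = {t \<in> set w. A_event r \<delta> L m (tile_center L t) \<omega>}"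
  define F where "F = {t \<in> set w. \<not> A_event r \<delta> L m (tile_center L t) \<omega>}"
  have "real (card G) \<le> real (card {z \<in> tiles L. visits p z L \<and> A_event r \<delta> L m z \<omega>})"
    using card_A_event_tiles_le[OF assms(1) w(3), of r \<delta> m \<omega>] unfolding G_def by simp
  also have "\<dots> \<le> real_of_int (l1dist (hd p) (last p)) / (2 * real L) / 4"
    using few by simp
  also have "\<dots> \<le> real n / 4"
    unfolding n by (simp add: real_nat_ceiling_ge)
  finally have "real (card G) \<le> real n / 4" .
  moreover have "card G + card F = n"
  proof -
    have "set w = G \<union> F" "G \<inter> F = {}"
      unfolding G_def F_def by auto
    moreover have "finite G" "finite F"
      unfolding G_def F_def by simp_all
    ultimately have "card G + card F = card (set w)"
      by (simp add: card_Un_disjoint)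
    then show ?thesis
      using distinct_card[OF w(2)] w(1) unfolding king_walks_def by simp
  qed
  ultimately have "n \<le> 2 * card F"
    by linarith
  then have "F \<in> {B. B \<subseteq> set w \<and> n \<le> 2 * card B}"
    unfolding F_def by blast
  moreover have "\<omega> \<in> local_failure ((real m - 1) * real L * (r + \<delta>)) L m t" if "t \<in> F" for t
    using that A_local_imp_A_event[OF assms(3,2,1), of r \<delta> "tile_center L t"]
    unfolding F_def local_failure_def by blast
  ultimately show ?thesis
    using w(1,2) unfolding half_failed_walks_def by blast
qed

lemma path_event_subset:
  assumes "L \<ge> 1" "m \<ge> 2" "1 \<le> n"
    and n: "n = nat \<lceil>real_of_int (l1dist x y) / (2 * real L)\<rceil>"
  shows "{\<omega>. \<exists>p. nn_path p \<and> hd p = x \<and> last p = y \<and>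
      real (card {z \<in> tiles L. visits p z L \<and> A_event r \<delta> L m z \<omega>})
        \<le> 1 / (8 * real L) * real_of_int (l1dist x y)}
    \<subseteq> half_failed_walks ((real m - 1) * real L * (r + \<delta>)) L m n (tile_index L x) \<union>
      {\<omega>. \<exists>e. \<omega> e < 0}"
proof (intro subsetI)
  fix \<omega>
  assume "\<omega> \<in> {\<omega>. \<exists>p. nn_path p \<and> hd p = x \<and> last p = y \<and>
      real (card {z \<in> tiles L. visits p z L \<and> A_event r \<delta> L m z \<omega>})
        \<le> 1 / (8 * real L) * real_of_int (l1dist x y)}"
  then obtain p where p: "nn_path p" "hd p = x" "last p = y"
    "real (card {z \<in> tiles L. visits p z L \<and> A_event r \<delta> L m z \<omega>})
      \<le> 1 / (8 * real L) * real_of_int (l1dist (hd p) (last p))"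
    by blast
  show "\<omega> \<in> half_failed_walks ((real m - 1) * real L * (r + \<delta>)) L m n (tile_index L x) \<union>
      {\<omega>. \<exists>e. \<omega> e < 0}"
  proof (cases "\<forall>e. 0 \<le> \<omega> e")
    case True
    moreover have "n = nat \<lceil>real_of_int (l1dist (hd p) (last p)) / (2 * real L)\<rceil>"
      using p(2,3) n by simp
    ultimately show ?thesis
      using mem_half_failed_walks[OF assms(1,2) _ p(1) assms(3) _ p(4)] p(2) by simp
  qed (simp add: not_le)
qed

lemma half_pow_le_exp:
  assumes "a > 0"
  shows "(1/2 :: real) ^ nat \<lceil>d / a\<rceil> \<le> exp (- (ln 2 / a) * d)"
proof -
  have "d / a * ln 2 \<le> real (nat \<lceil>d / a\<rceil>) * ln 2"
    using real_nat_ceiling_ge by (rule mult_right_mono) simp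
  then have "exp (- (real (nat \<lceil>d / a\<rceil>) * ln 2)) \<le> exp (- (ln 2 / a) * d)"
    by (simp add: mult.commute)
  moreover have "exp (- (real (nat \<lceil>d / a\<rceil>) * ln 2)) = (1/2 :: real) ^ nat \<lceil>d / a\<rceil>"
    by (simp add: exp_minus exp_of_nat_mult power_one_over inverse_eq_divide)
  ultimately show ?thesis
    by simp
qed

context iid_weights
begin

lemma sets_Inter_local_failure: "(\<Inter>t\<in>B. local_failure c L m t) \<in> sets (weights \<mu>)"
proof (rule sets.countable_INT'')
  show "UNIV \<in> sets (weights \<mu>)"
    using sets.top[of "weights \<mu>"] by (simp add: space_weights)
  show "local_failure c L m t \<in> sets (weights \<mu>)" for t
    unfolding local_failure_def by (rule sets_not_A_local)
qed simp

lemma prob_local_failure_le: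
  "measure (weights \<mu>) (local_failure ((real m - 1) * real L * (r + \<delta>)) L m t)
    \<le> 1 - measure (weights \<mu>) {\<omega> \<in> space (weights \<mu>). A_event r \<delta> L m 0 \<omega>}"
proof -
  let ?A = "{\<omega> \<in> space (weights \<mu>). A_event r \<delta> L m (tile_center L t) \<omega>}"
  have "local_failure ((real m - 1) * real L * (r + \<delta>)) L m t \<subseteq> space (weights \<mu>) - ?A"
    unfolding local_failure_def using A_event_imp_A_local[of r \<delta> L m "tile_center L t"]
    by (auto simp: space_weights)
  then have "measure (weights \<mu>) (local_failure ((real m - 1) * real L * (r + \<delta>)) L m t)
      \<le> measure (weights \<mu>) (space (weights \<mu>) - ?A)"
    by (rule W.finite_measure_mono) (simp add: sets.compl_sets sets_A_event)
  also have "\<dots> = 1 - measure (weights \<mu>) ?A"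
    using sets_A_event by (rule W.prob_compl)
  also have "\<dots> = 1 - measure (weights \<mu>) {\<omega> \<in> space (weights \<mu>). A_event r \<delta> L m 0 \<omega>}"
    by (simp only: prob_A_event_translate[of r \<delta> L m "tile_center L t"])
  finally show ?thesis .
qed

lemma prob_Inter_local_failure_le:
  fixes q :: real
  assumes "L \<ge> 1" "finite B" "n \<le> 2 * card B" "0 \<le> q" "q \<le> 1"
    and small: "\<And>t. measure (weights \<mu>) (local_failure c L m t) \<le> q ^ (2 * (m + 1)\<^sup>2)"
  shows "measure (weights \<mu>) (\<Inter>t\<in>B. local_failure c L m t) \<le> q ^ n"
proof (cases "B = {}")
  case True
  then show ?thesis
    using assms(3) by simp
next
  case False
  let ?K = "{0..int m} \<times> {0..int m}"
  have "card {0..int m} = m + 1"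
    by simp
  then have card_K: "card ?K = (m + 1)\<^sup>2"
    by (simp add: card_cartesian_product power2_eq_square)
  have colours: "colour m ` B \<subseteq> ?K"
    using colour_range by blast
  obtain k where "card B \<le> card ?K * card {t \<in> B. colour m t = k}"
    by (rule pigeonhole_fibre[OF _ _ colours]) auto
  define Bk where "Bk = {t \<in> B. colour m t = k}"
  have k: "card B \<le> (m + 1)\<^sup>2 * card Bk"
    using \<open>card B \<le> _\<close> unfolding card_K Bk_def .
  have "finite Bk"
    using assms(2) unfolding Bk_def by simp
  moreover have "Bk \<noteq> {}"
  proof
    assume "Bk = {}"
    then have "card B = 0"
      using k by simp
    then show False
      using False assms(2) by simp
  qed
  moreover have "disjoint_family_on (\<lambda>t. ball_edges (int m * int L) (tile_center L t)) Bk"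
    unfolding disjoint_family_on_def Bk_def by (auto intro!: ball_edges_disjoint_same_colour[OF assms(1)])
  ultimately have "measure (weights \<mu>) (\<Inter>t\<in>Bk. local_failure c L m t) =
      (\<Prod>t\<in>Bk. measure (weights \<mu>) (local_failure c L m t))"
    unfolding local_failure_def by (rule prob_Inter_not_A_local)
  also have "\<dots> \<le> (\<Prod>t\<in>Bk. q ^ (2 * (m + 1)\<^sup>2))"
    using small by (intro prod_mono) simp
  also have "\<dots> = q ^ (2 * (m + 1)\<^sup>2 * card Bk)"
    by (simp add: power_mult)
  also have "\<dots> \<le> q ^ n"
  proof (rule power_decreasing)
    show "n \<le> 2 * (m + 1)\<^sup>2 * card Bk"
      using assms(3) k by linarith
  qed (use assms(4,5) in auto)
  finally have "measure (weights \<mu>) (\<Inter>t\<in>Bk. local_failure c L m t) \<le> q ^ n" .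
  moreover have "(\<Inter>t\<in>B. local_failure c L m t) \<subseteq> (\<Inter>t\<in>Bk. local_failure c L m t)"
    unfolding Bk_def by blast
  then have "measure (weights \<mu>) (\<Inter>t\<in>B. local_failure c L m t)
      \<le> measure (weights \<mu>) (\<Inter>t\<in>Bk. local_failure c L m t)"
    using sets_Inter_local_failure by (rule W.finite_measure_mono)
  ultimately show ?thesis
    by linarith
qed

lemma sets_failed_subsets:
  assumes "finite A"
  shows "(\<Union>B\<in>{B. B \<subseteq> A \<and> n \<le> 2 * card B}. \<Inter>t\<in>B. local_failure c L m t) \<in> sets (weights \<mu>)"
proof (rule sets.finite_UN)
  show "finite {B. B \<subseteq> A \<and> n \<le> 2 * card B}"
    using assms by (rule finite_subset[rotated, OF finite_Pow_iff[THEN iffD2]]) blast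
qed (rule sets_Inter_local_failure)

lemma prob_failed_subsets_le:
  assumes "L \<ge> 1" "finite A"
    and small: "\<And>t. measure (weights \<mu>) (local_failure c L m t) \<le> (1/36) ^ (2 * (m + 1)\<^sup>2)"
  shows "measure (weights \<mu>) (\<Union>B\<in>{B. B \<subseteq> A \<and> n \<le> 2 * card B}. \<Inter>t\<in>B. local_failure c L m t)
    \<le> 2 ^ card A * (1/36) ^ n"
proof -
  let ?B = "{B. B \<subseteq> A \<and> n \<le> 2 * card B}"
  have sub: "?B \<subseteq> Pow A"
    by blast
  then have "finite ?B" "card ?B \<le> 2 ^ card A"
    using assms(2) finite_subset[OF sub] card_mono[OF _ sub] by (simp_all add: card_Pow)
  have "measure (weights \<mu>) (\<Union>B\<in>?B. \<Inter>t\<in>B. local_failure c L m t)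
      \<le> (\<Sum>B\<in>?B. measure (weights \<mu>) (\<Inter>t\<in>B. local_failure c L m t))"
    using \<open>finite ?B\<close> sets_Inter_local_failure by (rule measure_UNION_le)
  also have "\<dots> \<le> (\<Sum>B\<in>?B. (1/36) ^ n)"
  proof (rule sum_mono)
    fix B
    assume "B \<in> ?B"
    then have "finite B" "n \<le> 2 * card B"
      using assms(2) finite_subset[of B A] by simp_all
    then show "measure (weights \<mu>) (\<Inter>t\<in>B. local_failure c L m t) \<le> (1/36) ^ n"
      by (rule prob_Inter_local_failure_le[OF assms(1) _ _ _ _ small]) simp_all
  qed
  also have "\<dots> \<le> 2 ^ card A * (1/36) ^ n"
  proof -
    have "real (card ?B) \<le> 2 ^ card A"
      using \<open>card ?B \<le> _\<close> by (metis of_nat_le_iff of_nat_numeral of_nat_power)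
    then show ?thesis
      by (simp add: mult_right_mono)
  qed
  finally show ?thesis .
qed

lemma sets_half_failed_walks: "half_failed_walks c L m n s \<in> sets (weights \<mu>)"
  unfolding half_failed_walks_def using finite_king_walks
  by (intro sets.finite_UN sets_failed_subsets) simp_all

text \<open>The constant \<open>1/36 = 1/(9 \<cdot> 2 \<cdot> 2)\<close> beats the at most \<open>9\<^sup>n\<close> walks and
  \<open>2\<^sup>n\<close> choices of failing tiles, leaving \<open>2\<^sup>-\<^sup>n\<close>.\<close>

lemma prob_half_failed_walks_le:
  assumes "L \<ge> 1"
    and small: "\<And>t. measure (weights \<mu>) (local_failure c L m t) \<le> (1/36) ^ (2 * (m + 1)\<^sup>2)"
  shows "measure (weights \<mu>) (half_failed_walks c L m n s) \<le> (1/2) ^ n"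
proof -
  let ?W = "{w \<in> king_walks n s. distinct w}"
  have "finite ?W"
    using finite_king_walks by simp
  have "card ?W \<le> card (king_walks n s)"
    by (rule card_mono[OF finite_king_walks]) blast
  then have "card ?W \<le> 9 ^ n"
    using card_king_walks_le[of n s] by simp
  have "measure (weights \<mu>) (half_failed_walks c L m n s)
      \<le> (\<Sum>w\<in>?W. measure (weights \<mu>)
            (\<Union>B\<in>{B. B \<subseteq> set w \<and> n \<le> 2 * card B}. \<Inter>t\<in>B. local_failure c L m t))"
    unfolding half_failed_walks_def using \<open>finite ?W\<close>
    by (rule measure_UNION_le) (simp add: sets_failed_subsets)
  also have "\<dots> \<le> (\<Sum>w\<in>?W. 2 ^ n * (1/36) ^ n)"
  proof (rule sum_mono)
    fix w
    assume "w \<in> ?W"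
    then have "card (set w) = n"
      by (simp add: distinct_card king_walks_def)
    then show "measure (weights \<mu>) (\<Union>B\<in>{B. B \<subseteq> set w \<and> n \<le> 2 * card B}. \<Inter>t\<in>B. local_failure c L m t)
        \<le> 2 ^ n * (1/36) ^ n"
      using prob_failed_subsets_le[OF assms(1) finite_set[of w] small, of n] by simp
  qed
  also have "\<dots> \<le> 9 ^ n * (2 ^ n * (1/36) ^ n)"
  proof -
    have "real (card ?W) \<le> 9 ^ n"
      using \<open>card ?W \<le> 9 ^ n\<close> by (metis of_nat_le_iff of_nat_numeral of_nat_power)
    then show ?thesis
      by (simp add: mult_right_mono)
  qed
  also have "\<dots> = (9 * 2 * (1/36)) ^ n"
    by (simp only: power_mult_distrib mult.assoc)
  finally show ?thesis
    by simp
qed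

lemma prob_path_event_le:
  assumes "L \<ge> 1" "m \<ge> 2" and nonneg: "emeasure \<mu> {..<0} = 0"
    and good: "1 - (1/36) ^ (2 * (m + 1)\<^sup>2)
      < measure (weights \<mu>) {\<omega> \<in> space (weights \<mu>). A_event r \<delta> L m 0 \<omega>}"
  shows "measure (weights \<mu>) {\<omega> \<in> space (weights \<mu>). \<exists>p. nn_path p \<and> hd p = x \<and> last p = y \<and>
      real (card {z \<in> tiles L. visits p z L \<and> A_event r \<delta> L m z \<omega>})
        \<le> 1 / (8 * real L) * real_of_int (l1dist x y)}
    \<le> exp (- (ln 2 / (2 * real L)) * real_of_int (l1dist x y))"
    (is "measure _ ?E \<le> _")
proof -
  define n where "n = nat \<lceil>real_of_int (l1dist x y) / (2 * real L)\<rceil>"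
  define c where "c = (real m - 1) * real L * (r + \<delta>)"
  let ?F = "half_failed_walks c L m n (tile_index L x)"
  let ?N = "{\<omega>. \<exists>e. \<omega> e < 0}"
  have "measure (weights \<mu>) ?E \<le> (1/2) ^ n"
  proof (cases "n = 0")
    case False
    then have n_pos: "1 \<le> n"
      by simp
    have "?E \<subseteq> ?F \<union> ?N"
      unfolding c_def by (rule order.trans[OF _ path_event_subset[OF assms(1,2) n_pos n_def]]) auto
    moreover have "?N \<in> sets (weights \<mu>)"
      using negative_weights_null[OF nonneg] by (rule null_setsD2)
    ultimately have "measure (weights \<mu>) ?E \<le> measure (weights \<mu>) (?F \<union> ?N)"
      by (intro W.finite_measure_mono sets.Un sets_half_failed_walks)
    also have "\<dots> = measure (weights \<mu>) ?F"
      using sets_half_failed_walks negative_weights_null[OF nonneg] by (rule measure_Un_null_set)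
    also have "\<dots> \<le> (1/2) ^ n"
    proof (rule prob_half_failed_walks_le[OF assms(1)])
      show "measure (weights \<mu>) (local_failure c L m t) \<le> (1/36) ^ (2 * (m + 1)\<^sup>2)" for t
        using prob_local_failure_le[of m L r \<delta> t] good unfolding c_def by linarith
    qed
    finally show ?thesis .
  qed simp
  also have "\<dots> \<le> exp (- (ln 2 / (2 * real L)) * real_of_int (l1dist x y))"
    unfolding n_def using assms(1) by (intro half_pow_le_exp) simp
  finally show ?thesis .
qed

end

theorem lemmaA2:
  fixes \<mu> :: "real measure" and \<delta> :: real
  assumes "prob_space \<mu>" and "sets \<mu> = sets borel"
    and "emeasure \<mu> {..<0} = 0"
    and "Fdist \<mu> 0 < 1/2"
    and "Fdist \<mu> (r_min \<mu>) < pc_oriented"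
    and "\<delta> > 0"
    and "\<forall>m\<ge>2. \<forall>z. ((\<lambda>L. measure (weights \<mu>)
            {\<omega> \<in> space (weights \<mu>). A_event (r_min \<mu>) \<delta> L m z \<omega>}) \<longlongrightarrow> 1) sequentially"
  shows "\<forall>m\<ge>2. \<forall>\<^sub>F L in sequentially. L \<ge> 1 \<and>
    (\<exists>\<theta>>0. \<exists>\<gamma>>0. \<exists>C::real. \<forall>x y.
      measure (weights \<mu>)
        {\<omega> \<in> space (weights \<mu>). \<exists>p. nn_path p \<and> hd p = x \<and> last p = y \<and>
           real (card {z \<in> tiles L. visits p z L \<and> A_event (r_min \<mu>) \<delta> L m z \<omega>})
             \<le> \<theta> * real_of_int (l1dist x y)}
      < C * exp (- \<gamma> * real_of_int (l1dist x y)))"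
proof (intro allI impI, goal_cases)
  case (1 m)
  interpret iid_weights \<mu>
    by (rule iid_weights.intro[OF assms(1,2)])
  have "1 - (1/36) ^ (2 * (m + 1)\<^sup>2) < (1 :: real)"
    by simp
  then have "\<forall>\<^sub>F L in sequentially. 1 - (1/36) ^ (2 * (m + 1)\<^sup>2)
      < measure (weights \<mu>) {\<omega> \<in> space (weights \<mu>). A_event (r_min \<mu>) \<delta> L m 0 \<omega>}"
    by (rule order_tendstoD(1)[OF assms(7)[rule_format, OF 1]])
  with eventually_ge_at_top[of 1] show ?case
  proof eventually_elim
    case (elim L)
    then show ?case
      by (intro conjI exI[of _ "1 / (8 * real L)"] exI[of _ "ln 2 / (2 * real L)"] exI[of _ 2] allI
          le_less_trans[OF prob_path_event_le[OF elim(1) 1 assms(3) elim(2)]]) simp_all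
  qed
qed

end
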